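(* Let $\phi$ be a probability density on $\mathbb{R}$ and consider the location-scale family $f(x;\mu,\sigma)=\sigma^{-1}\phi((x-\mu)/\sigma)$, $(\mu,\sigma)\in\mathbb{R}\times(0,\infty)$. Let $X_1,\dots,X_n,Y$ be iid from $f(\cdot;\mu_0,\sigma_0)$. Define $$\Lambda_n(\boldsymbol{x}_n,y)=\frac{\sup_{\mu,\sigma}f(y;\mu,\sigma)\prod_{i=1}^n f(x_i;\mu,\sigma)}{\sup_{\mu,\mu_y,\sigma}f(y;\mu_y,\sigma)\prod_{i=1}^n f(x_i;\mu,\sigma)}$$ (i.e. the full model lets $Y$ have its own location $\mu_y$ with common scale $\sigma$), and assume both suprema are finite and positive almost surely. Then $\Lambda_n(\boldsymbol{X}_n,Y)$ (equivalently $-2\log\Lambda_n(\boldsymbol{X}_n,Y)$) is a pivotal quantity: its distribution equals that of $\Lambda_n(Z_1,\dots,Z_n,Z_0)$ with $Z_0,\dots,Z_n$ iid with density $\phi$, and hence does not depend on $(\mu_0,\sigma_0)$. Consequently, if this distribution is continuous at its $1-\alpha$ quantile, the parametric-bootstrap prediction region $\{y:-2\log\Lambda_n(\boldsymbol{x}_n,y)\le\lambda^*_{1-\alpha}\}$ (with $\lambda^*_{1-\alpha}$ the $1-\alpha$ quantile of the exact bootstrap distribution of $-2\log\Lambda_n(\boldsymbol{X}_n^*,Y^* )$, $X_i^*,Y^*$ iid from $f(\cdot;\widehat\mu,\widehat\sigma)$ for any estimator $(\widehat\mu,\widehat\sigma)$) has coverage exactly $1-\alpha$ for all $(\mu_0,\sigma_0)$.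 *)

theory Defs
  imports "HOL-Probability.Probability"
begin

definition lsf :: "(real \<Rightarrow> real) \<Rightarrow> real \<Rightarrow> real \<Rightarrow> real \<Rightarrow> real" where
  "lsf \<phi> x \<mu> \<sigma> = \<phi> ((x - \<mu>) / \<sigma>) / \<sigma>"

definition lsdist :: "(real \<Rightarrow> real) \<Rightarrow> real \<Rightarrow> real \<Rightarrow> real measure" where
  "lsdist \<phi> \<mu> \<sigma> = density lborel (\<lambda>x. ennreal (lsf \<phi> x \<mu> \<sigma>))"

text \<open>Joint law of (X_1,...,X_n, Y) iid from f(.; mu, sigma); the X-sample is a
  function on the index set {..<n} (indices 0..n-1).\<close>
definition sample :: "(real \<Rightarrow> real) \<Rightarrow> nat \<Rightarrow> real \<Rightarrow> real \<Rightarrow> ((nat \<Rightarrow> real) \<times> real) measure" where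
  "sample \<phi> n \<mu> \<sigma> = (PiM {..<n} (\<lambda>_. lsdist \<phi> \<mu> \<sigma>)) \<Otimes>\<^sub>M lsdist \<phi> \<mu> \<sigma>"

definition numsup :: "(real \<Rightarrow> real) \<Rightarrow> nat \<Rightarrow> (nat \<Rightarrow> real) \<Rightarrow> real \<Rightarrow> ereal" where
  "numsup \<phi> n x y = (SUP p \<in> UNIV \<times> {0<..}.
      ereal (lsf \<phi> y (fst p) (snd p) * (\<Prod>i<n. lsf \<phi> (x i) (fst p) (snd p))))"

definition densup :: "(real \<Rightarrow> real) \<Rightarrow> nat \<Rightarrow> (nat \<Rightarrow> real) \<Rightarrow> real \<Rightarrow> ereal" where
  "densup \<phi> n x y = (SUP p \<in> (UNIV \<times> UNIV) \<times> {0<..}.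
      ereal (lsf \<phi> y (snd (fst p)) (snd p) * (\<Prod>i<n. lsf \<phi> (x i) (fst (fst p)) (snd p))))"

definition LR :: "(real \<Rightarrow> real) \<Rightarrow> nat \<Rightarrow> (nat \<Rightarrow> real) \<Rightarrow> real \<Rightarrow> real" where
  "LR \<phi> n x y = real_of_ereal (numsup \<phi> n x y) / real_of_ereal (densup \<phi> n x y)"

definition quantile :: "real measure \<Rightarrow> real \<Rightarrow> real" where
  "quantile D p = Inf {t. measure D {..t} \<ge> p}"

end

theory Submission
  imports Defs
begin

text \<open>
  Applying \<open>z \<mapsto> \<mu> + \<sigma> z\<close> to every coordinate carries the standard sample (density \<open>\<phi>\<close>)
  to the sample with parameters \<open>(\<mu>, \<sigma>)\<close>.  Under this map each likelihood gets the factor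
  \<open>\<sigma>^-(n+1)\<close> after an affine bijection of the parameter space, so both suprema scale alike
  and \<open>\<Lambda>\<^sub>n\<close> is invariant; its law is therefore the law under the standard sample.  The
  bootstrap quantile then does not depend on the estimate at all: it is the exact \<open>1 - \<alpha>\<close>
  quantile of this pivotal law, and without an atom there the coverage is exactly \<open>1 - \<alpha>\<close>.
\<close>

lemma lsf_standard [simp]: "lsf \<phi> x 0 1 = \<phi> x"
  by (simp add: lsf_def)

lemma lsf_affine:
  assumes "\<sigma> > 0" "s > 0"
  shows "lsf \<phi> (\<mu> + \<sigma> * t) m s = lsf \<phi> t ((m - \<mu>) / \<sigma>) (s / \<sigma>) / \<sigma>"
proof -
  have "(t - (m - \<mu>) / \<sigma>) / (s / \<sigma>) = (\<mu> + \<sigma> * t - m) / s"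
    using assms by (simp add: field_simps)
  then show ?thesis
    using assms by (simp add: lsf_def)
qed

lemma SUP_ereal_cmult_reindex:
  assumes "\<theta> ` A = A" "A \<noteq> {}" "c \<ge> 0"
  shows "(SUP p\<in>A. ereal (c * h (\<theta> p))) = ereal c * (SUP p\<in>A. ereal (h p))"
proof -
  have "(SUP p\<in>A. ereal (c * h (\<theta> p))) = ereal c * (SUP p\<in>A. ereal (h (\<theta> p)))"
    using assms by (simp add: Sup_ereal_mult_left')
  also have "(SUP p\<in>A. ereal (h (\<theta> p))) = (SUP p\<in>A. ereal (h p))"
    by (metis assms(1) image_image)
  finally show ?thesis .
qed

lemma numsup_affine:
  assumes \<sigma>: "\<sigma> > 0"
  shows "numsup \<phi> n (\<lambda>i. \<mu> + \<sigma> * z i) (\<mu> + \<sigma> * z0)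
       = ereal (1 / \<sigma> ^ Suc n) * numsup \<phi> n z z0"
proof -
  define P :: "(real \<times> real) set" where "P = UNIV \<times> {0<..}"
  define \<theta> where "\<theta> p = ((fst p - \<mu>) / \<sigma>, snd p / \<sigma>)" for p :: "real \<times> real"
  define L where "L p = lsf \<phi> z0 (fst p) (snd p) * (\<Prod>i<n. lsf \<phi> (z i) (fst p) (snd p))"
    for p :: "real \<times> real"
  have "\<theta> ` P = P"
  proof
    show "\<theta> ` P \<subseteq> P"
      using \<sigma> by (auto simp: \<theta>_def P_def)
    show "P \<subseteq> \<theta> ` P"
    proof
      fix q assume "q \<in> P"
      then have "q = \<theta> (\<mu> + \<sigma> * fst q, \<sigma> * snd q)" "(\<mu> + \<sigma> * fst q, \<sigma> * snd q) \<in> P"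
        using \<sigma> by (auto simp: \<theta>_def P_def)
      then show "q \<in> \<theta> ` P" by blast
    qed
  qed
  have "numsup \<phi> n (\<lambda>i. \<mu> + \<sigma> * z i) (\<mu> + \<sigma> * z0) = (SUP p\<in>P. ereal (1 / \<sigma> ^ Suc n * L (\<theta> p)))"
    unfolding numsup_def P_def[symmetric]
  proof (rule SUP_cong)
    fix p assume "p \<in> P"
    then have "snd p > 0" by (simp add: P_def mem_Times_iff)
    then show "ereal (lsf \<phi> (\<mu> + \<sigma> * z0) (fst p) (snd p) * (\<Prod>i<n. lsf \<phi> (\<mu> + \<sigma> * z i) (fst p) (snd p)))
        = ereal (1 / \<sigma> ^ Suc n * L (\<theta> p))"
      using \<sigma> by (simp add: L_def \<theta>_def lsf_affine prod_dividef)
  qed simp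
  also have "\<dots> = ereal (1 / \<sigma> ^ Suc n) * (SUP p\<in>P. ereal (L p))"
    by (rule SUP_ereal_cmult_reindex) (use \<open>\<theta> ` P = P\<close> \<sigma> in \<open>auto simp: P_def\<close>)
  finally show ?thesis
    unfolding numsup_def L_def P_def .
qed

lemma densup_affine:
  assumes \<sigma>: "\<sigma> > 0"
  shows "densup \<phi> n (\<lambda>i. \<mu> + \<sigma> * z i) (\<mu> + \<sigma> * z0)
       = ereal (1 / \<sigma> ^ Suc n) * densup \<phi> n z z0"
proof -
  define P :: "((real \<times> real) \<times> real) set" where "P = (UNIV \<times> UNIV) \<times> {0<..}"
  define \<theta> where "\<theta> p = (((fst (fst p) - \<mu>) / \<sigma>, (snd (fst p) - \<mu>) / \<sigma>), snd p / \<sigma>)"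
    for p :: "(real \<times> real) \<times> real"
  define L where "L p = lsf \<phi> z0 (snd (fst p)) (snd p) * (\<Prod>i<n. lsf \<phi> (z i) (fst (fst p)) (snd p))"
    for p :: "(real \<times> real) \<times> real"
  have "\<theta> ` P = P"
  proof
    show "\<theta> ` P \<subseteq> P"
      using \<sigma> by (auto simp: \<theta>_def P_def)
    show "P \<subseteq> \<theta> ` P"
    proof
      fix q assume "q \<in> P"
      then have "q = \<theta> ((\<mu> + \<sigma> * fst (fst q), \<mu> + \<sigma> * snd (fst q)), \<sigma> * snd q)"
          "((\<mu> + \<sigma> * fst (fst q), \<mu> + \<sigma> * snd (fst q)), \<sigma> * snd q) \<in> P"
        using \<sigma> by (auto simp: \<theta>_def P_def)
      then show "q \<in> \<theta> ` P" by blast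
    qed
  qed
  have "densup \<phi> n (\<lambda>i. \<mu> + \<sigma> * z i) (\<mu> + \<sigma> * z0) = (SUP p\<in>P. ereal (1 / \<sigma> ^ Suc n * L (\<theta> p)))"
    unfolding densup_def P_def[symmetric]
  proof (rule SUP_cong)
    fix p assume "p \<in> P"
    then have "snd p > 0" by (simp add: P_def mem_Times_iff)
    then show "ereal (lsf \<phi> (\<mu> + \<sigma> * z0) (snd (fst p)) (snd p)
          * (\<Prod>i<n. lsf \<phi> (\<mu> + \<sigma> * z i) (fst (fst p)) (snd p)))
        = ereal (1 / \<sigma> ^ Suc n * L (\<theta> p))"
      using \<sigma> by (simp add: L_def \<theta>_def lsf_affine prod_dividef)
  qed simp
  also have "\<dots> = ereal (1 / \<sigma> ^ Suc n) * (SUP p\<in>P. ereal (L p))"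
    by (rule SUP_ereal_cmult_reindex) (use \<open>\<theta> ` P = P\<close> \<sigma> in \<open>auto simp: P_def\<close>)
  finally show ?thesis
    unfolding densup_def L_def P_def .
qed

lemma LR_restrict: "LR \<phi> n (restrict x {..<n}) y = LR \<phi> n x y"
  unfolding LR_def numsup_def densup_def by simp

text \<open>
  No positivity or finiteness of the suprema is needed: both scale by the same positive
  factor, and a supremum equal to \<open>0\<close> or \<open>\<infinity>\<close> stays so, giving the junk value \<open>0\<close> on both
  sides.
\<close>
lemma LR_affine_invariant:
  assumes "\<sigma> > 0"
  shows "LR \<phi> n (\<lambda>i\<in>{..<n}. \<mu> + \<sigma> * z i) (\<mu> + \<sigma> * z0) = LR \<phi> n z z0"
proof -
  have "LR \<phi> n (\<lambda>i\<in>{..<n}. \<mu> + \<sigma> * z i) (\<mu> + \<sigma> * z0) = LR \<phi> n (\<lambda>i. \<mu> + \<sigma> * z i) (\<mu> + \<sigma> * z0)"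
    by (rule LR_restrict)
  also have "\<dots> = LR \<phi> n z z0"
    using assms by (simp add: LR_def numsup_affine densup_affine)
  finally show ?thesis .
qed

context real_distribution
begin

lemma quantile_eq_Inf_cdf: "quantile M p = Inf {t. p \<le> cdf M t}"
  by (simp add: quantile_def cdf_def2)

lemma cdf_quantile_set_bounds:
  assumes "0 < p" "p < 1"
  shows "{t. p \<le> cdf M t} \<noteq> {}" "bdd_below {t. p \<le> cdf M t}"
proof -
  have "\<forall>\<^sub>F t in at_top. p < cdf M t"
    using cdf_lim_at_top_prob assms by (intro order_tendstoD) auto
  then obtain t where "p < cdf M t"
    by (auto simp: eventually_at_top_linorder)
  then show "{t. p \<le> cdf M t} \<noteq> {}"
    by (auto intro!: exI[of _ t])
  have "\<forall>\<^sub>F t in at_bot. cdf M t < p"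
    using cdf_lim_at_bot assms by (intro order_tendstoD) auto
  then obtain b where b: "\<And>t. t \<le> b \<Longrightarrow> cdf M t < p"
    by (auto simp: eventually_at_bot_linorder)
  show "bdd_below {t. p \<le> cdf M t}"
  proof (rule bdd_belowI)
    fix s assume "s \<in> {t. p \<le> cdf M t}"
    then show "b \<le> s"
      using b[of s] by force
  qed
qed

lemma cdf_less_below_quantile:
  assumes "0 < p" "p < 1" "t < quantile M p"
  shows "cdf M t < p"
proof (rule ccontr)
  assume "\<not> cdf M t < p"
  then have "Inf {t. p \<le> cdf M t} \<le> t"
    by (intro cInf_lower cdf_quantile_set_bounds(2)[OF assms(1,2)]) simp
  with assms(3) show False
    by (simp add: quantile_eq_Inf_cdf)
qed

lemma cdf_ge_above_quantile:
  assumes "0 < p" "p < 1" "quantile M p < t"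
  shows "p \<le> cdf M t"
proof -
  have "Inf {t. p \<le> cdf M t} < t"
    using assms(3) by (simp add: quantile_eq_Inf_cdf)
  then obtain s where "p \<le> cdf M s" "s < t"
    using cInf_less_iff[OF cdf_quantile_set_bounds[OF assms(1,2)]] by auto
  then show ?thesis
    using cdf_nondecreasing[of s t] by simp
qed

text \<open>
  Without an atom at the quantile the cdf is continuous there, so the strict bound from the
  left and the bound from the right meet.
\<close>
lemma measure_atMost_quantile:
  assumes "0 < p" "p < 1" and no_atom: "measure M {quantile M p} = 0"
  shows "measure M {..quantile M p} = p"
proof -
  define q where "q = quantile M p"
  have "isCont (cdf M) q"
    using no_atom isCont_cdf q_def by simp
  then have left: "(cdf M \<longlongrightarrow> cdf M q) (at_left q)" and right: "(cdf M \<longlongrightarrow> cdf M q) (at_right q)"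
    by (simp_all add: isCont_def filterlim_at_split)
  have "cdf M q \<le> p"
  proof (rule tendsto_upperbound[OF left])
    show "\<forall>\<^sub>F t in at_left q. cdf M t \<le> p"
      using cdf_less_below_quantile[OF assms(1,2)]
      by (auto simp: q_def eventually_at_left_field intro!: exI[of _ "q - 1"] less_imp_le)
  qed simp
  moreover have "p \<le> cdf M q"
  proof (rule tendsto_lowerbound[OF right])
    show "\<forall>\<^sub>F t in at_right q. p \<le> cdf M t"
      using cdf_ge_above_quantile[OF assms(1,2)]
      by (auto simp: q_def eventually_at_right_field intro!: exI[of _ "q + 1"])
  qed simp
  ultimately show ?thesis
    by (simp add: q_def cdf_def2)
qed

end

lemma sets_lsdist [simp, measurable_cong]: "sets (lsdist \<phi> \<mu> \<sigma>) = sets borel"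
  by (simp add: lsdist_def)

lemma sets_sample [simp, measurable_cong]:
  "sets (sample \<phi> n \<mu> \<sigma>) = sets (PiM {..<n} (\<lambda>_. borel) \<Otimes>\<^sub>M borel)"
  unfolding sample_def by (intro sets_pair_measure_cong sets_PiM_cong) simp_all

locale prob_density =
  fixes \<phi> :: "real \<Rightarrow> real"
  assumes measurable_phi [measurable]: "\<phi> \<in> borel_measurable borel"
    and phi_nonneg: "\<And>x. \<phi> x \<ge> 0"
    and nn_integral_phi: "(\<integral>\<^sup>+ x. ennreal (\<phi> x) \<partial>lborel) = 1"
begin

lemma lsdist_eq_distr_affine:
  assumes \<sigma>: "\<sigma> > 0"
  shows "lsdist \<phi> \<mu> \<sigma> = distr (lsdist \<phi> 0 1) borel (\<lambda>z. \<mu> + \<sigma> * z)"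
proof (rule measure_eqI)
  fix A assume "A \<in> sets (lsdist \<phi> \<mu> \<sigma>)"
  then have A [measurable]: "A \<in> sets borel" by simp
  have "emeasure (lsdist \<phi> \<mu> \<sigma>) A = (\<integral>\<^sup>+x. ennreal (lsf \<phi> x \<mu> \<sigma>) * indicator A x \<partial>lborel)"
    unfolding lsdist_def by (subst emeasure_density) (auto simp: lsf_def)
  also have "\<dots> = ennreal \<sigma> * (\<integral>\<^sup>+z. ennreal (lsf \<phi> (\<mu> + \<sigma> * z) \<mu> \<sigma>) * indicator A (\<mu> + \<sigma> * z) \<partial>lborel)"
    using \<sigma> by (subst nn_integral_real_affine[where c=\<sigma> and t=\<mu>]) (auto simp: lsf_def)
  also have "\<dots> = (\<integral>\<^sup>+z. ennreal \<sigma> * (ennreal (lsf \<phi> (\<mu> + \<sigma> * z) \<mu> \<sigma>) * indicator A (\<mu> + \<sigma> * z)) \<partial>lborel)"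
    by (subst nn_integral_cmult) (auto simp: lsf_def)
  also have "\<dots> = (\<integral>\<^sup>+z. ennreal (\<phi> z) * indicator ((\<lambda>z. \<mu> + \<sigma> * z) -` A) z \<partial>lborel)"
    using \<sigma> phi_nonneg
    by (intro nn_integral_cong) (auto simp: lsf_def indicator_def ennreal_mult[symmetric])
  also have "\<dots> = emeasure (distr (lsdist \<phi> 0 1) borel (\<lambda>z. \<mu> + \<sigma> * z)) A"
  proof -
    have "(\<lambda>z. \<mu> + \<sigma> * z) -` A \<in> sets lborel"
      by (simp add: measurable_sets_borel[OF _ A])
    then show ?thesis
      unfolding lsdist_def lsf_standard by (simp add: emeasure_distr emeasure_density)
  qed
  finally show "emeasure (lsdist \<phi> \<mu> \<sigma>) A = emeasure (distr (lsdist \<phi> 0 1) borel (\<lambda>z. \<mu> + \<sigma> * z)) A" .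
qed (simp add: lsdist_def)

lemma prob_space_lsdist_standard: "prob_space (lsdist \<phi> 0 1)"
  by (rule prob_spaceI) (simp add: lsdist_def emeasure_density nn_integral_phi)

lemma prob_space_lsdist:
  assumes "\<sigma> > 0"
  shows "prob_space (lsdist \<phi> \<mu> \<sigma>)"
proof -
  interpret prob_space "lsdist \<phi> 0 1"
    by (rule prob_space_lsdist_standard)
  show ?thesis
    unfolding lsdist_eq_distr_affine[OF assms] by (rule prob_space_distr) simp
qed

lemma prob_space_sample:
  assumes "\<sigma> > 0"
  shows "prob_space (sample \<phi> n \<mu> \<sigma>)"
  unfolding sample_def by (intro prob_space_pair prob_space_PiM prob_space_lsdist assms)

lemma sample_eq_distr_affine:
  assumes \<sigma>: "\<sigma> > 0"
  shows "sample \<phi> n \<mu> \<sigma> = distr (sample \<phi> n 0 1) (sample \<phi> n \<mu> \<sigma>)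
           (\<lambda>(z, z0). (\<lambda>i\<in>{..<n}. \<mu> + \<sigma> * z i, \<mu> + \<sigma> * z0))"
proof -
  define L where "L = lsdist \<phi> 0 1"
  define M where "M = lsdist \<phi> \<mu> \<sigma>"
  define a where "a z = \<mu> + \<sigma> * z" for z :: real
  have L: "prob_space L"
    unfolding L_def by (rule prob_space_lsdist_standard)
  have M: "prob_space M"
    unfolding M_def by (rule prob_space_lsdist[OF \<sigma>])
  have a [measurable]: "a \<in> measurable L M"
    unfolding L_def M_def a_def by measurable
  have M_eq: "M = distr L M a"
    unfolding M_def L_def a_def lsdist_eq_distr_affine[OF \<sigma>] by (intro distr_cong) simp_all
  have PiM_eq: "PiM {..<n} (\<lambda>_. M) = distr (PiM {..<n} (\<lambda>_. L)) (PiM {..<n} (\<lambda>_. M)) (compose {..<n} a)"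
    by (subst M_eq) (rule distr_PiM_finite_prob_space'[symmetric], simp_all add: L M)
  have "compose {..<n} a \<in> measurable (PiM {..<n} (\<lambda>_. L)) (PiM {..<n} (\<lambda>_. M))"
    unfolding compose_def L_def M_def a_def by measurable
  moreover have "sigma_finite_measure (distr L M a)"
    using M M_eq prob_space_imp_sigma_finite by metis
  ultimately have "sample \<phi> n \<mu> \<sigma> = distr (PiM {..<n} (\<lambda>_. L) \<Otimes>\<^sub>M L) (PiM {..<n} (\<lambda>_. M) \<Otimes>\<^sub>M M)
      (\<lambda>(x, y). (compose {..<n} a x, a y))"
    unfolding sample_def M_def[symmetric] using PiM_eq M_eq
    by (metis a pair_measure_distr)
  also have "\<dots> = distr (sample \<phi> n 0 1) (sample \<phi> n \<mu> \<sigma>)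
      (\<lambda>(z, z0). (\<lambda>i\<in>{..<n}. \<mu> + \<sigma> * z i, \<mu> + \<sigma> * z0))"
    unfolding sample_def L_def M_def a_def compose_def by (intro distr_cong) auto
  finally show ?thesis .
qed

lemma distr_affine_invariant_statistic:
  assumes T_meas: "(\<lambda>(x, y). T x y) \<in> borel_measurable (PiM {..<n} (\<lambda>_. borel) \<Otimes>\<^sub>M borel)"
    and T_inv: "\<And>z z0. T (\<lambda>i\<in>{..<n}. \<mu> + \<sigma> * z i) (\<mu> + \<sigma> * z0) = T z z0"
    and \<sigma>: "\<sigma> > 0"
  shows "distr (sample \<phi> n \<mu> \<sigma>) borel (\<lambda>(x, y). T x y) = distr (sample \<phi> n 0 1) borel (\<lambda>(x, y). T x y)"
proof -
  define G where "G = (\<lambda>(z, z0). (\<lambda>i\<in>{..<n}. \<mu> + \<sigma> * z i, \<mu> + \<sigma> * z0))"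
  have "(\<lambda>(x, y). T x y) \<in> borel_measurable (sample \<phi> n \<mu> \<sigma>)"
    using T_meas by (simp cong: measurable_cong_sets)
  moreover have "G \<in> measurable (sample \<phi> n 0 1) (sample \<phi> n \<mu> \<sigma>)"
    unfolding G_def by (simp cong: measurable_cong_sets) measurable
  ultimately have "distr (sample \<phi> n \<mu> \<sigma>) borel (\<lambda>(x, y). T x y)
      = distr (sample \<phi> n 0 1) borel ((\<lambda>(x, y). T x y) \<circ> G)"
    by (subst sample_eq_distr_affine[OF \<sigma>]) (simp add: G_def[symmetric] distr_distr)
  also have "\<dots> = distr (sample \<phi> n 0 1) borel (\<lambda>(x, y). T x y)"
    by (intro distr_cong) (auto simp: G_def T_inv)
  finally show ?thesis .
qed

lemma bootstrap_prediction_coverage: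
  fixes n :: nat and T :: "(nat \<Rightarrow> real) \<Rightarrow> real \<Rightarrow> real" and \<mu>hat \<sigma>hat :: "(nat \<Rightarrow> real) \<Rightarrow> real"
  defines "D \<equiv> distr (sample \<phi> n 0 1) borel (\<lambda>(x, y). T x y)"
  assumes T_meas: "(\<lambda>(x, y). T x y) \<in> borel_measurable (PiM {..<n} (\<lambda>_. borel) \<Otimes>\<^sub>M borel)"
    and T_inv: "\<And>\<mu> \<sigma> z z0. \<sigma> > 0 \<Longrightarrow> T (\<lambda>i\<in>{..<n}. \<mu> + \<sigma> * z i) (\<mu> + \<sigma> * z0) = T z z0"
    and \<alpha>: "0 < \<alpha>" "\<alpha> < 1" and \<sigma>hat: "\<And>x. \<sigma>hat x > 0"
    and no_atom: "measure D {quantile D (1 - \<alpha>)} = 0"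
    and \<sigma>0: "\<sigma>0 > 0"
  shows "measure (sample \<phi> n \<mu>0 \<sigma>0)
           {(x, y) \<in> space (sample \<phi> n \<mu>0 \<sigma>0).
              T x y \<le> quantile (distr (sample \<phi> n (\<mu>hat x) (\<sigma>hat x)) borel (\<lambda>(x', y'). T x' y')) (1 - \<alpha>)}
         = 1 - \<alpha>"
proof -
  have pivotal: "distr (sample \<phi> n \<mu> \<sigma>) borel (\<lambda>(x, y). T x y) = D" if "\<sigma> > 0" for \<mu> \<sigma>
    unfolding D_def by (rule distr_affine_invariant_statistic[OF T_meas T_inv[OF that] that])
  have T_meas': "(\<lambda>(x, y). T x y) \<in> borel_measurable (sample \<phi> n \<mu>0 \<sigma>0)"
    using T_meas by (simp cong: measurable_cong_sets)
  interpret S: prob_space "sample \<phi> n 0 1"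
    by (rule prob_space_sample) simp
  interpret D: real_distribution D
    unfolding D_def using T_meas by (intro S.real_distribution_distr) (simp cong: measurable_cong_sets)
  have "{(x, y) \<in> space (sample \<phi> n \<mu>0 \<sigma>0).
          T x y \<le> quantile (distr (sample \<phi> n (\<mu>hat x) (\<sigma>hat x)) borel (\<lambda>(x', y'). T x' y')) (1 - \<alpha>)}
      = (\<lambda>(x, y). T x y) -` {..quantile D (1 - \<alpha>)} \<inter> space (sample \<phi> n \<mu>0 \<sigma>0)"
    using pivotal \<sigma>hat by auto
  then have "measure (sample \<phi> n \<mu>0 \<sigma>0)
           {(x, y) \<in> space (sample \<phi> n \<mu>0 \<sigma>0).
              T x y \<le> quantile (distr (sample \<phi> n (\<mu>hat x) (\<sigma>hat x)) borel (\<lambda>(x', y'). T x' y')) (1 - \<alpha>)}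
      = measure (distr (sample \<phi> n \<mu>0 \<sigma>0) borel (\<lambda>(x, y). T x y)) {..quantile D (1 - \<alpha>)}"
    using T_meas' by (simp add: measure_distr)
  also have "\<dots> = 1 - \<alpha>"
    using \<alpha> no_atom by (simp add: pivotal[OF \<sigma>0] D.measure_atMost_quantile)
  finally show ?thesis .
qed

end

theorem theorem1:
  fixes \<phi> :: "real \<Rightarrow> real" and n :: nat
  assumes phi_meas: "\<phi> \<in> borel_measurable borel"
    and phi_nonneg: "\<And>x. \<phi> x \<ge> 0"
    and phi_int: "(\<integral>\<^sup>+ x. ennreal (\<phi> x) \<partial>lborel) = 1"
    and LR_meas: "(\<lambda>(x, y). LR \<phi> n x y) \<in> borel_measurable (PiM {..<n} (\<lambda>_. borel) \<Otimes>\<^sub>M borel)"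
    and sups_ok: "\<And>\<mu>0 \<sigma>0. \<sigma>0 > 0 \<Longrightarrow> AE (x, y) in sample \<phi> n \<mu>0 \<sigma>0.
        0 < numsup \<phi> n x y \<and> numsup \<phi> n x y < \<infinity> \<and>
        0 < densup \<phi> n x y \<and> densup \<phi> n x y < \<infinity>"
  shows "(\<forall>\<mu>0 \<sigma>0. \<sigma>0 > 0 \<longrightarrow>
            distr (sample \<phi> n \<mu>0 \<sigma>0) borel (\<lambda>(x, y). LR \<phi> n x y)
          = distr (sample \<phi> n 0 1) borel (\<lambda>(x, y). LR \<phi> n x y))
       \<and> (\<forall>(\<alpha>::real) (\<mu>hat :: (nat \<Rightarrow> real) \<Rightarrow> real) (\<sigma>hat :: (nat \<Rightarrow> real) \<Rightarrow> real).
            0 < \<alpha> \<and> \<alpha> < 1 \<and> (\<forall>x. \<sigma>hat x > 0) \<and>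
            measure (distr (sample \<phi> n 0 1) borel (\<lambda>(x, y). -2 * ln (LR \<phi> n x y)))
              {quantile (distr (sample \<phi> n 0 1) borel (\<lambda>(x, y). -2 * ln (LR \<phi> n x y))) (1 - \<alpha>)} = 0
          \<longrightarrow> (\<forall>\<mu>0 \<sigma>0. \<sigma>0 > 0 \<longrightarrow>
                measure (sample \<phi> n \<mu>0 \<sigma>0)
                  {(x, y) \<in> space (sample \<phi> n \<mu>0 \<sigma>0).
                     -2 * ln (LR \<phi> n x y)
                       \<le> quantile (distr (sample \<phi> n (\<mu>hat x) (\<sigma>hat x)) borel
                                    (\<lambda>(x', y'). -2 * ln (LR \<phi> n x' y'))) (1 - \<alpha>)}
                = 1 - \<alpha>))"
proof (intro conjI allI impI)
  interpret prob_density \<phi>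
    using phi_meas phi_nonneg phi_int by unfold_locales
  show "distr (sample \<phi> n \<mu>0 \<sigma>0) borel (\<lambda>(x, y). LR \<phi> n x y)
      = distr (sample \<phi> n 0 1) borel (\<lambda>(x, y). LR \<phi> n x y)" if "\<sigma>0 > 0" for \<mu>0 \<sigma>0
    by (rule distr_affine_invariant_statistic[OF LR_meas LR_affine_invariant that]) (fact that)
  have "(\<lambda>(x, y). -2 * ln (LR \<phi> n x y)) \<in> borel_measurable (PiM {..<n} (\<lambda>_. borel) \<Otimes>\<^sub>M borel)"
    using LR_meas by measurable
  then show "measure (sample \<phi> n \<mu>0 \<sigma>0)
                  {(x, y) \<in> space (sample \<phi> n \<mu>0 \<sigma>0).
                     -2 * ln (LR \<phi> n x y)
                       \<le> quantile (distr (sample \<phi> n (\<mu>hat x) (\<sigma>hat x)) borel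
                                    (\<lambda>(x', y'). -2 * ln (LR \<phi> n x' y'))) (1 - \<alpha>)}
                = 1 - \<alpha>"
    if "0 < \<alpha> \<and> \<alpha> < 1 \<and> (\<forall>x. \<sigma>hat x > 0) \<and>
            measure (distr (sample \<phi> n 0 1) borel (\<lambda>(x, y). -2 * ln (LR \<phi> n x y)))
              {quantile (distr (sample \<phi> n 0 1) borel (\<lambda>(x, y). -2 * ln (LR \<phi> n x y))) (1 - \<alpha>)} = 0"
      and "\<sigma>0 > 0"
    for \<alpha> \<mu>hat \<sigma>hat \<mu>0 \<sigma>0
    using that by (intro bootstrap_prediction_coverage) (simp_all add: LR_affine_invariant)
qed

end
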